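(* If $G$ is the $3\times 3$, $3\times 5$, or $4\times 4$ square lattice graph $P_m\times P_n$, then $T_1(G)=3$.
   Context: $P_m\times P_n$ is the Cartesian product of paths on $m$ and $n$ vertices (the $m\times n$ square lattice graph). Fix a set $\Sigma$ of symbols (bond-edge types) and a disjoint copy $\hat\Sigma=\{\hat a:a\in\Sigma\}$ with $\hat{\hat a}=a$; elements of $\Sigma\cup\hat\Sigma$ are cohesive-end types. A tile is a finite multiset of cohesive-end types. A pot is a finite set $P$ of tiles such that whenever $x$ occurs in a tile of $P$, $\hat x$ occurs in some tile of $P$; $\#P$ is its number of tiles. Graphs are finite, loops and multiple edges allowed. An assembly design of a graph $H$ labels the half-edges of $H$ by cohesive-end types so that the two half-edges of each edge receive complementary labels $x,\hat x$; $t_v$ is the multiset of labels at $v$, $P_\lambda(H)=\{t_v\}$, and $P$ realizes $H$ ($H\in\mathcal{O}(P)$) if some assembly design $\lambda$ has $P_\lambda(H)\subseteq P$. $T_1(G)=\min\{\#P: G\in\mathcal{O}(P)\}$. *)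

theory Defs
  imports Main "HOL-Library.Multiset"
begin

text \<open>Cohesive-end types: a symbol a (from Sigma = nat) together with a flag;
  (a, False) is the bond-edge type a, (a, True) is its complement hat a.\<close>
type_synonym cet = "nat \<times> bool"

definition hat :: "cet \<Rightarrow> cet" where
  "hat x = (fst x, \<not> snd x)"

type_synonym tile = "cet multiset"

definition is_pot :: "tile set \<Rightarrow> bool" where
  "is_pot P \<longleftrightarrow> finite P \<and>
     (\<forall>t\<in>P. \<forall>x. x \<in># t \<longrightarrow> (\<exists>t'\<in>P. hat x \<in># t'))"

text \<open>Simple graphs are given by a finite vertex set V and a symmetric, irreflexive
  adjacency relation E. A labelling lam assigns to the half-edge of edge {u,v} at u
  the label lam u v; an assembly design requires complementary labels on each edge.\<close>
definition assembly_design :: "'v set \<Rightarrow> ('v \<Rightarrow> 'v \<Rightarrow> bool) \<Rightarrow> ('v \<Rightarrow> 'v \<Rightarrow> cet) \<Rightarrow> bool" where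
  "assembly_design V E lam \<longleftrightarrow> (\<forall>u\<in>V. \<forall>v\<in>V. E u v \<longrightarrow> lam v u = hat (lam u v))"

definition tile_at :: "'v set \<Rightarrow> ('v \<Rightarrow> 'v \<Rightarrow> bool) \<Rightarrow> ('v \<Rightarrow> 'v \<Rightarrow> cet) \<Rightarrow> 'v \<Rightarrow> tile" where
  "tile_at V E lam v = image_mset (lam v) (mset_set {w \<in> V. E v w})"

definition realizes :: "tile set \<Rightarrow> 'v set \<Rightarrow> ('v \<Rightarrow> 'v \<Rightarrow> bool) \<Rightarrow> bool" where
  "realizes P V E \<longleftrightarrow>
     (\<exists>lam. assembly_design V E lam \<and> (\<forall>v\<in>V. tile_at V E lam v \<in> P))"

definition T1 :: "'v set \<Rightarrow> ('v \<Rightarrow> 'v \<Rightarrow> bool) \<Rightarrow> nat" where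
  "T1 V E = (LEAST k. \<exists>P. is_pot P \<and> realizes P V E \<and> card P = k)"

definition grid_V :: "nat \<Rightarrow> nat \<Rightarrow> (nat \<times> nat) set" where
  "grid_V m n = {0..<m} \<times> {0..<n}"

definition grid_E :: "nat \<times> nat \<Rightarrow> nat \<times> nat \<Rightarrow> bool" where
  "grid_E p q \<longleftrightarrow>
     (fst p = fst q \<and> (snd p = snd q + 1 \<or> snd q = snd p + 1)) \<or>
     (snd p = snd q \<and> (fst p = fst q + 1 \<or> fst q = fst p + 1))"

end

theory Submission
  imports Defs
begin

text \<open>The tile at a vertex has as many cohesive ends as the vertex has neighbours, so a pot
  realizing a graph has at least as many tiles as the graph has distinct vertex degrees.
  Conversely, use a single bond-edge type \<open>a\<close>, orient every edge and put \<open>a\<close> at its tail and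
  \<open>\<hat>a\<close> at its head: the tile at a vertex then consists of out-degree many \<open>a\<close> and in-degree
  many \<open>\<hat>a\<close>. If the out-degree is a function of the degree, vertices of equal degree get
  equal tiles and the lower bound is attained. The 3\<times>3, 3\<times>5 and 4\<times>4 grids have vertices of
  degrees 2, 3 and 4 and admit such orientations.\<close>

definition neighbours :: "'v set \<Rightarrow> ('v \<Rightarrow> 'v \<Rightarrow> bool) \<Rightarrow> 'v \<Rightarrow> 'v set" where
  "neighbours V E v = {w \<in> V. E v w}"

definition degree :: "'v set \<Rightarrow> ('v \<Rightarrow> 'v \<Rightarrow> bool) \<Rightarrow> 'v \<Rightarrow> nat" where
  "degree V E v = card (neighbours V E v)"

lemma size_tile_at: "size (tile_at V E lam v) = degree V E v"
  by (simp add: tile_at_def degree_def neighbours_def)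

lemma card_degrees_le_card_pot:
  assumes "finite P" and "realizes P V E"
  shows "card (degree V E ` V) \<le> card P"
proof -
  obtain lam where tiles: "\<forall>v\<in>V. tile_at V E lam v \<in> P"
    using assms(2) unfolding realizes_def by blast
  have "degree V E ` V \<subseteq> size ` P"
    using tiles by (metis image_eqI image_subsetI size_tile_at)
  then have "card (degree V E ` V) \<le> card (size ` P)"
    using assms(1) by (intro card_mono) auto
  also have "\<dots> \<le> card P"
    using assms(1) by (rule card_image_le)
  finally show ?thesis .
qed

lemma is_pot_tiles:
  assumes "finite V" and "\<forall>u\<in>V. \<forall>v\<in>V. E u v \<longrightarrow> E v u" and "assembly_design V E lam"
  shows "is_pot (tile_at V E lam ` V)"
  unfolding is_pot_def
proof (intro conjI ballI allI impI)
  show "finite (tile_at V E lam ` V)"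
    using assms(1) by simp
  fix t x assume "t \<in> tile_at V E lam ` V" and "x \<in># t"
  then obtain u w where uw: "u \<in> V" "w \<in> V" "E u w" and x: "x = lam u w"
    using assms(1) by (auto simp: tile_at_def)
  have "u \<in># mset_set {v \<in> V. E w v}"
    using assms(1,2) uw by simp
  moreover have "lam w u = hat x"
    using assms(3) uw x by (simp add: assembly_design_def)
  ultimately have "hat x \<in># tile_at V E lam w"
    unfolding tile_at_def by (metis imageI in_image_mset)
  with \<open>w \<in> V\<close> show "\<exists>t'\<in>tile_at V E lam ` V. hat x \<in># t'"
    by blast
qed

lemma realizes_tiles:
  assumes "assembly_design V E lam"
  shows "realizes (tile_at V E lam ` V) V E"
  using assms unfolding realizes_def by blast

lemma T1_eqI:
  assumes "is_pot P" and "realizes P V E" and "card P = k"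
    and "\<And>Q. is_pot Q \<Longrightarrow> realizes Q V E \<Longrightarrow> k \<le> card Q"
  shows "T1 V E = k"
  unfolding T1_def using assms by (intro Least_equality) blast+

definition is_orientation :: "'v set \<Rightarrow> ('v \<Rightarrow> 'v \<Rightarrow> bool) \<Rightarrow> ('v \<times> 'v) set \<Rightarrow> bool" where
  "is_orientation V E D \<longleftrightarrow> (\<forall>u\<in>V. \<forall>v\<in>neighbours V E u. (v, u) \<in> D \<longleftrightarrow> (u, v) \<notin> D)"

definition out_degree :: "'v set \<Rightarrow> ('v \<Rightarrow> 'v \<Rightarrow> bool) \<Rightarrow> ('v \<times> 'v) set \<Rightarrow> 'v \<Rightarrow> nat" where
  "out_degree V E D v = card (neighbours V E v \<inter> D `` {v})"

definition orientation_labelling :: "('v \<times> 'v) set \<Rightarrow> 'v \<Rightarrow> 'v \<Rightarrow> cet" where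
  "orientation_labelling D u v = (0, (u, v) \<notin> D)"

definition oriented_tile :: "nat \<Rightarrow> nat \<Rightarrow> tile" where
  "oriented_tile d k = replicate_mset k (0, False) + replicate_mset (d - k) (0, True)"

lemma out_degree_le_degree:
  assumes "finite V"
  shows "out_degree V E D v \<le> degree V E v"
  using assms unfolding out_degree_def degree_def neighbours_def by (intro card_mono) auto

lemma assembly_design_orientation_labelling:
  assumes "is_orientation V E D"
  shows "assembly_design V E (orientation_labelling D)"
  using assms unfolding is_orientation_def assembly_design_def orientation_labelling_def
    neighbours_def hat_def by auto

lemma tile_at_orientation_labelling:
  assumes "finite V"
  shows "tile_at V E (orientation_labelling D) v = oriented_tile (degree V E v) (out_degree V E D v)"
proof -
  let ?M = "mset_set (neighbours V E v)"
  let ?O = "{#w \<in># ?M. (v, w) \<in> D#}"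
  have "tile_at V E (orientation_labelling D) v =
      image_mset (\<lambda>w. if (v, w) \<in> D then (0, False) else (0, True)) ?M"
    unfolding tile_at_def neighbours_def orientation_labelling_def by (auto intro: image_mset_cong)
  also have "\<dots> = replicate_mset (size ?O) (0, False) + replicate_mset (size ?M - size ?O) (0, True)"
  proof -
    have "size ?M = size ?O + size {#w \<in># ?M. (v, w) \<notin> D#}"
      by (metis multiset_partition size_union)
    then show ?thesis by (simp add: image_mset_If image_mset_const_eq)
  qed
  also have "\<dots> = oriented_tile (degree V E v) (out_degree V E D v)"
    using assms by (simp add: oriented_tile_def degree_def out_degree_def neighbours_def Int_def)
  finally show ?thesis .
qed

theorem T1_eq_card_degrees:
  assumes "finite V" and "\<forall>u\<in>V. \<forall>v\<in>V. E u v \<longrightarrow> E v u"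
    and "is_orientation V E D" and "\<forall>v\<in>V. out_degree V E D v = out (degree V E v)"
  shows "T1 V E = card (degree V E ` V)"
proof (rule T1_eqI)
  let ?lam = "orientation_labelling D"
  let ?tile = "\<lambda>d. oriented_tile d (out d)"
  have design: "assembly_design V E ?lam"
    using assms(3) by (rule assembly_design_orientation_labelling)
  show "is_pot (tile_at V E ?lam ` V)"
    using assms(1,2) design by (rule is_pot_tiles)
  show "realizes (tile_at V E ?lam ` V) V E"
    using design by (rule realizes_tiles)
  have "tile_at V E ?lam v = ?tile (degree V E v)" if "v \<in> V" for v
    using assms(1,4) that by (simp add: tile_at_orientation_labelling)
  then have "tile_at V E ?lam ` V = ?tile ` degree V E ` V"
    unfolding image_image by (rule image_cong[OF refl])
  moreover have "inj_on ?tile (degree V E ` V)"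
  proof (rule inj_on_inverseI)
    fix d assume "d \<in> degree V E ` V"
    then obtain v where "v \<in> V" and "d = degree V E v"
      by blast
    then have "out d \<le> d"
      using assms(4) out_degree_le_degree[OF assms(1)] by metis
    then show "size (?tile d) = d"
      by (simp add: oriented_tile_def)
  qed
  ultimately show "card (tile_at V E ?lam ` V) = card (degree V E ` V)"
    by (simp add: card_image)
  show "card (degree V E ` V) \<le> card Q" if "is_pot Q" and "realizes Q V E" for Q
    using that card_degrees_le_card_pot by (auto simp: is_pot_def)
qed

lemma grid_neighbours:
  assumes "i < m" and "j < n"
  shows "neighbours (grid_V m n) grid_E (i, j) =
    (if 0 < i then {(i - 1, j)} else {}) \<union> (if i + 1 < m then {(i + 1, j)} else {}) \<union>
    (if 0 < j then {(i, j - 1)} else {}) \<union> (if j + 1 < n then {(i, j + 1)} else {})"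
  using assms unfolding neighbours_def grid_V_def grid_E_def by (auto split: if_splits)

lemma grid_degree:
  assumes "i < m" and "j < n"
  shows "degree (grid_V m n) grid_E (i, j) =
    of_bool (0 < i) + of_bool (i + 1 < m) + of_bool (0 < j) + of_bool (j + 1 < n)"
  using assms unfolding degree_def grid_neighbours[OF assms]
  by (cases i; cases j) (auto simp: card_insert_if)

lemma grid_degrees:
  assumes "3 \<le> m" and "3 \<le> n"
  shows "degree (grid_V m n) grid_E ` grid_V m n = {2, 3, 4}"
proof
  show "degree (grid_V m n) grid_E ` grid_V m n \<subseteq> {2, 3, 4}"
  proof (rule image_subsetI)
    fix v assume "v \<in> grid_V m n"
    then obtain i j where "v = (i, j)" "i < m" "j < n" by (auto simp: grid_V_def)
    then show "degree (grid_V m n) grid_E v \<in> {2, 3, 4}"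
      using assms by (auto simp: grid_degree of_bool_def)
  qed
  have "(0, 0) \<in> grid_V m n" "(0, 1) \<in> grid_V m n" "(1, 1) \<in> grid_V m n"
    using assms by (auto simp: grid_V_def)
  moreover have "degree (grid_V m n) grid_E (0, 0) = 2" "degree (grid_V m n) grid_E (0, 1) = 3"
      "degree (grid_V m n) grid_E (1, 1) = 4"
    using assms by (simp_all add: grid_degree)
  ultimately show "{2, 3, 4} \<subseteq> degree (grid_V m n) grid_E ` grid_V m n"
    by (metis empty_subsetI image_eqI insert_subset)
qed

lemma ball_grid_V: "(\<forall>v\<in>grid_V m n. P v) \<longleftrightarrow> (\<forall>i\<in>{..<m}. \<forall>j\<in>{..<n}. P (i, j))"
  by (auto simp: grid_V_def)

text \<open>Unfolding (rather than simplifying with) these rules expands the vertex quantifier of a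
  concrete grid into a conjunction before the simplifier sees the body; otherwise it rewrites
  under symbolic coordinates and splits cases exponentially.\<close>

lemmas ball_lessThan_numeral_unfold =
  lessThan_nat_numeral pred_numeral_simps BitM.simps lessThan_0 ball_simps simp_thms

lemma T1_grid_eq_3:
  assumes "3 \<le> m" and "3 \<le> n" and "is_orientation (grid_V m n) grid_E D"
    and "\<forall>v\<in>grid_V m n. out_degree (grid_V m n) grid_E D v = out (degree (grid_V m n) grid_E v)"
  shows "T1 (grid_V m n) grid_E = 3"
proof -
  have "finite (grid_V m n)"
    by (simp add: grid_V_def)
  moreover have "\<forall>u\<in>grid_V m n. \<forall>v\<in>grid_V m n. grid_E u v \<longrightarrow> grid_E v u"
    by (auto simp: grid_E_def)
  ultimately have "T1 (grid_V m n) grid_E = card (degree (grid_V m n) grid_E ` grid_V m n)"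
    using assms(3,4) by (rule T1_eq_card_degrees)
  also have "\<dots> = 3"
    using grid_degrees[OF assms(1,2)] by simp
  finally show ?thesis .
qed

text \<open>In the 3\<times>3 grid every edge points to its endpoint of smaller degree.\<close>

definition orientation_3_3 :: "((nat \<times> nat) \<times> (nat \<times> nat)) set" where
  "orientation_3_3 = {((0,1),(0,0)), ((1,0),(0,0)), ((0,1),(0,2)), ((1,1),(0,1)), ((1,2),(0,2)),
    ((1,1),(1,0)), ((1,0),(2,0)), ((1,1),(1,2)), ((1,1),(2,1)), ((1,2),(2,2)), ((2,1),(2,0)),
    ((2,1),(2,2))}"

definition orientation_3_5 :: "((nat \<times> nat) \<times> (nat \<times> nat)) set" where
  "orientation_3_5 = {((0,1),(0,0)), ((1,0),(0,0)), ((0,1),(0,2)), ((1,1),(0,1)), ((0,2),(0,3)),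
    ((0,2),(1,2)), ((0,3),(0,4)), ((0,3),(1,3)), ((1,4),(0,4)), ((1,1),(1,0)), ((1,0),(2,0)),
    ((1,2),(1,1)), ((2,1),(1,1)), ((1,2),(1,3)), ((2,2),(1,2)), ((1,3),(1,4)), ((1,3),(2,3)),
    ((1,4),(2,4)), ((2,1),(2,0)), ((2,2),(2,1)), ((2,3),(2,2)), ((2,3),(2,4))}"

definition orientation_4_4 :: "((nat \<times> nat) \<times> (nat \<times> nat)) set" where
  "orientation_4_4 = {((0,1),(0,0)), ((1,0),(0,0)), ((0,1),(0,2)), ((1,1),(0,1)), ((0,2),(0,3)),
    ((0,2),(1,2)), ((1,3),(0,3)), ((1,0),(1,1)), ((2,0),(1,0)), ((1,1),(1,2)), ((2,1),(1,1)),
    ((1,2),(1,3)), ((1,2),(2,2)), ((1,3),(2,3)), ((2,1),(2,0)), ((2,0),(3,0)), ((2,2),(2,1)),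
    ((3,1),(2,1)), ((2,3),(2,2)), ((2,2),(3,2)), ((2,3),(3,3)), ((3,1),(3,0)), ((3,2),(3,1)),
    ((3,2),(3,3))}"

lemma is_orientation_3_3: "is_orientation (grid_V 3 3) grid_E orientation_3_3"
  unfolding is_orientation_def ball_grid_V ball_lessThan_numeral_unfold
  by (simp add: grid_neighbours orientation_3_3_def)

lemma out_degree_3_3:
  "\<forall>v\<in>grid_V 3 3. out_degree (grid_V 3 3) grid_E orientation_3_3 v =
    2 * degree (grid_V 3 3) grid_E v - 4"
  unfolding ball_grid_V ball_lessThan_numeral_unfold out_degree_def
  by (simp add: grid_neighbours grid_degree orientation_3_3_def Int_insert_left)

lemma is_orientation_3_5: "is_orientation (grid_V 3 5) grid_E orientation_3_5"
  unfolding is_orientation_def ball_grid_V ball_lessThan_numeral_unfold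
  by (simp add: grid_neighbours orientation_3_5_def)

lemma out_degree_3_5:
  "\<forall>v\<in>grid_V 3 5. out_degree (grid_V 3 5) grid_E orientation_3_5 v =
    (if degree (grid_V 3 5) grid_E v = 2 then 0 else 2)"
  unfolding ball_grid_V ball_lessThan_numeral_unfold out_degree_def
  by (simp add: grid_neighbours grid_degree orientation_3_5_def Int_insert_left)

lemma is_orientation_4_4: "is_orientation (grid_V 4 4) grid_E orientation_4_4"
  unfolding is_orientation_def ball_grid_V ball_lessThan_numeral_unfold
  by (simp add: grid_neighbours orientation_4_4_def)

lemma out_degree_4_4:
  "\<forall>v\<in>grid_V 4 4. out_degree (grid_V 4 4) grid_E orientation_4_4 v =
    (if degree (grid_V 4 4) grid_E v = 2 then 0 else 2)"
  unfolding ball_grid_V ball_lessThan_numeral_unfold out_degree_def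
  by (simp add: grid_neighbours grid_degree orientation_4_4_def Int_insert_left)

theorem proposition6:
  fixes m n :: nat
  assumes "(m, n) \<in> {(3, 3), (3, 5), (4, 4)}"
  shows "T1 (grid_V m n) grid_E = 3"
  using assms
    T1_grid_eq_3[OF _ _ is_orientation_3_3 out_degree_3_3]
    T1_grid_eq_3[OF _ _ is_orientation_3_5 out_degree_3_5]
    T1_grid_eq_3[OF _ _ is_orientation_4_4 out_degree_4_4]
  by auto

end
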